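(* Let $S=K[x_1,\dots,x_n]$ be a standard graded polynomial ring over a field $K$, and let $I\subset S$ be a graded ideal generated in a single degree, with minimal homogeneous generating set $f_1,\dots,f_m$. Assume $I$ has linear relations, i.e. the module of relations $\{(r_1,\dots,r_m)\in S^m:\sum_i r_if_i=0\}$ is generated by relations $(\ell_1,\dots,\ell_m)$ whose entries are linear forms. Then for every $1\le i\le m$, the colon ideal $(f_1,\dots,f_{i-1},f_{i+1},\dots,f_m):f_i$ is generated by linear forms. *)

theory Defs
  imports Main "HOL-Library.Poly_Mapping"
begin

text \<open>Polynomial ring S = K[x_i : i in 'n] represented as ('n =>0 nat) =>0 'k:
  a polynomial is a finitely supported map from monomials (exponent vectors) to coefficients;
  multiplication is the convolution product provided by HOL-Library.Poly_Mapping.\<close>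

type_synonym ('n, 'k) mpoly = "('n \<Rightarrow>\<^sub>0 nat) \<Rightarrow>\<^sub>0 'k"

definition mono_deg :: "('n::finite \<Rightarrow>\<^sub>0 nat) \<Rightarrow> nat" where
  "mono_deg \<alpha> = (\<Sum>v\<in>UNIV. Poly_Mapping.lookup \<alpha> v)"

text \<open>Homogeneous of degree d (the zero polynomial is homogeneous of every degree).\<close>
definition homogeneous :: "nat \<Rightarrow> ('n::finite, 'k::zero) mpoly \<Rightarrow> bool" where
  "homogeneous d p \<longleftrightarrow> (\<forall>\<alpha>\<in>Poly_Mapping.keys p. mono_deg \<alpha> = d)"

definition linear_form :: "('n::finite, 'k::zero) mpoly \<Rightarrow> bool" where
  "linear_form p \<longleftrightarrow> homogeneous 1 p"

definition ideal_gen :: "'a::comm_ring_1 set \<Rightarrow> 'a set" where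
  "ideal_gen G = {\<Sum>g\<in>T. c g * g | T c. finite T \<and> T \<subseteq> G}"

definition colon :: "'a::comm_ring_1 set \<Rightarrow> 'a \<Rightarrow> 'a set" where
  "colon J a = {r. r * a \<in> J}"

text \<open>Module of relations (syzygies) of f_0,...,f_(m-1), as elements of S^m
  represented by functions nat => S vanishing outside {..<m}.\<close>
definition relations :: "nat \<Rightarrow> (nat \<Rightarrow> 'a::comm_ring_1) \<Rightarrow> (nat \<Rightarrow> 'a) set" where
  "relations m f = {r. (\<forall>j\<ge>m. r j = 0) \<and> (\<Sum>j<m. r j * f j) = 0}"

definition submodule_gen :: "(nat \<Rightarrow> 'a::comm_ring_1) set \<Rightarrow> (nat \<Rightarrow> 'a) set" where
  "submodule_gen B = {(\<lambda>j. \<Sum>b\<in>T. c b * b j) | T c. finite T \<and> T \<subseteq> B}"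

definition has_linear_relations :: "nat \<Rightarrow> (nat \<Rightarrow> ('n::finite, 'k::comm_ring_1) mpoly) \<Rightarrow> bool" where
  "has_linear_relations m f \<longleftrightarrow>
     relations m f = submodule_gen {r \<in> relations m f. \<forall>j<m. linear_form (r j)}"

end

theory Submission
  imports Defs
begin

text \<open>The colon ideal \<open>(f\<^sub>j : j \<noteq> i) : f\<^sub>i\<close> is exactly the set of \<open>i\<close>-th entries of relations
  of \<open>f\<close>, since \<open>r f\<^sub>i = \<Sum> c\<^sub>j f\<^sub>j\<close> (over \<open>j \<noteq> i\<close>) says that \<open>(-c\<^sub>1, \<dots>, r, \<dots>, -c\<^sub>m)\<close> is a
  relation. Taking \<open>i\<close>-th entries maps the submodule generated by a set \<open>B\<close> of relations onto
  the ideal generated by their \<open>i\<close>-th entries, so linear generators of the relation module give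
  linear generators of the colon ideal.\<close>

lemma mem_ideal_gen_image_iff:
  fixes f :: "'b \<Rightarrow> 'a::comm_ring_1"
  assumes "finite S"
  shows "x \<in> ideal_gen (f ` S) \<longleftrightarrow> (\<exists>c. x = (\<Sum>j\<in>S. c j * f j))"
proof
  assume "x \<in> ideal_gen (f ` S)"
  then obtain T c where "T \<subseteq> f ` S" and x: "x = (\<Sum>g\<in>T. c g * g)"
    unfolding ideal_gen_def by blast
  then obtain U where U: "U \<subseteq> S" "inj_on f U" "T = f ` U"
    by (auto simp: subset_image_inj)
  have "x = (\<Sum>j\<in>U. c (f j) * f j)"
    using x U by (simp add: sum.reindex)
  also have "\<dots> = (\<Sum>j\<in>S. (if j \<in> U then c (f j) else 0) * f j)"
    using U(1) by (intro sum.mono_neutral_cong_left[OF assms]) auto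
  finally show "\<exists>c. x = (\<Sum>j\<in>S. c j * f j)"
    by (intro exI[of _ "\<lambda>j. if j \<in> U then c (f j) else 0"])
next
  assume "\<exists>c. x = (\<Sum>j\<in>S. c j * f j)"
  then obtain c where "x = (\<Sum>j\<in>S. c j * f j)" by blast
  also have "\<dots> = (\<Sum>g\<in>f ` S. (\<Sum>j\<in>{j\<in>S. f j = g}. c j) * g)"
    using assms by (subst sum.image_gen) (auto intro!: sum.cong simp: sum_distrib_right)
  finally show "x \<in> ideal_gen (f ` S)"
    unfolding ideal_gen_def using assms
    by (intro CollectI exI[of _ "f ` S"] exI[of _ "\<lambda>g. \<Sum>j\<in>{j\<in>S. f j = g}. c j"]) simp
qed

lemma colon_eq_relations_component:
  fixes f :: "nat \<Rightarrow> 'a::comm_ring_1"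
  assumes "i < m"
  shows "colon (ideal_gen (f ` ({..<m} - {i}))) (f i) = (\<lambda>r. r i) ` relations m f"
proof (intro equalityI subsetI)
  have split: "(\<Sum>j<m. r j * f j) = r i * f i + (\<Sum>j\<in>{..<m} - {i}. r j * f j)" for r
    using assms by (simp add: sum.remove)
  fix x
  {
    assume "x \<in> colon (ideal_gen (f ` ({..<m} - {i}))) (f i)"
    then obtain c where c: "x * f i = (\<Sum>j\<in>{..<m} - {i}. c j * f j)"
      by (auto simp: colon_def mem_ideal_gen_image_iff)
    define r where "r = (\<lambda>j. if j = i then x else if j < m then - c j else 0)"
    have "(\<Sum>j\<in>{..<m} - {i}. r j * f j) = - (\<Sum>j\<in>{..<m} - {i}. c j * f j)"
      by (simp add: r_def sum_negf)
    then have "r \<in> relations m f"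
      using split[of r] c assms by (simp add: relations_def r_def)
    moreover have "r i = x" by (simp add: r_def)
    ultimately show "x \<in> (\<lambda>r. r i) ` relations m f" by blast
  next
    assume "x \<in> (\<lambda>r. r i) ` relations m f"
    then obtain r where "r \<in> relations m f" and x: "x = r i" by blast
    then have "x * f i = (\<Sum>j\<in>{..<m} - {i}. (- r j) * f j)"
      using split[of r] by (simp add: relations_def sum_negf eq_neg_iff_add_eq_0 add.commute)
    then show "x \<in> colon (ideal_gen (f ` ({..<m} - {i}))) (f i)"
      unfolding colon_def mem_Collect_eq mem_ideal_gen_image_iff[OF finite_Diff[OF finite_lessThan]]
      by (intro exI[of _ "\<lambda>j. - r j"])
  }
qed

lemma submodule_gen_component:
  fixes B :: "(nat \<Rightarrow> 'a::comm_ring_1) set"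
  shows "(\<lambda>r. r i) ` submodule_gen B = ideal_gen ((\<lambda>b. b i) ` B)"
proof (intro equalityI subsetI)
  fix x
  assume "x \<in> (\<lambda>r. r i) ` submodule_gen B"
  then obtain U c where U: "finite U" "U \<subseteq> B" and x: "x = (\<Sum>b\<in>U. c b * b i)"
    unfolding submodule_gen_def by blast
  have "x \<in> ideal_gen ((\<lambda>b. b i) ` U)"
    using x U(1) by (auto simp: mem_ideal_gen_image_iff)
  moreover have "ideal_gen ((\<lambda>b. b i) ` U) \<subseteq> ideal_gen ((\<lambda>b. b i) ` B)"
    using U(2) unfolding ideal_gen_def by blast
  ultimately show "x \<in> ideal_gen ((\<lambda>b. b i) ` B)" by blast
next
  fix x
  assume "x \<in> ideal_gen ((\<lambda>b. b i) ` B)"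
  then obtain T c where T: "finite T" "T \<subseteq> (\<lambda>b. b i) ` B" and x: "x = (\<Sum>l\<in>T. c l * l)"
    unfolding ideal_gen_def by blast
  then obtain U where U: "U \<subseteq> B" "inj_on (\<lambda>b. b i) U" "T = (\<lambda>b. b i) ` U"
    by (auto simp: subset_image_inj)
  have "finite U" using T(1) U by (simp add: finite_image_iff)
  moreover have "x = (\<Sum>b\<in>U. c (b i) * b i)"
    using x U by (simp add: sum.reindex)
  ultimately show "x \<in> (\<lambda>r. r i) ` submodule_gen B"
    using U(1) unfolding submodule_gen_def
    by (intro image_eqI[of _ _ "\<lambda>j. \<Sum>b\<in>U. c (b i) * b j"] CollectI exI[of _ U]
          exI[of _ "\<lambda>b. c (b i)"]) auto
qed

theorem lemma1p1:
  fixes f :: "nat \<Rightarrow> ('n::finite, 'k::field) mpoly"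
    and m d :: nat
  assumes single_degree: "\<forall>j<m. homogeneous d (f j)"
    and minimal: "\<forall>j<m. f j \<notin> ideal_gen (f ` ({..<m} - {j}))"
    and lin_rel: "has_linear_relations m f"
    and i: "i < m"
  shows "\<exists>L. (\<forall>l\<in>L. linear_form l) \<and>
             colon (ideal_gen (f ` ({..<m} - {i}))) (f i) = ideal_gen L"
proof -
  define B where "B = {r \<in> relations m f. \<forall>j<m. linear_form (r j)}"
  have "colon (ideal_gen (f ` ({..<m} - {i}))) (f i) = (\<lambda>r. r i) ` relations m f"
    using i by (rule colon_eq_relations_component)
  also have "\<dots> = (\<lambda>r. r i) ` submodule_gen B"
    using lin_rel unfolding has_linear_relations_def B_def by (rule arg_cong)
  also have "\<dots> = ideal_gen ((\<lambda>b. b i) ` B)"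
    by (rule submodule_gen_component)
  finally have "colon (ideal_gen (f ` ({..<m} - {i}))) (f i) = ideal_gen ((\<lambda>b. b i) ` B)" .
  moreover have "\<forall>l\<in>(\<lambda>b. b i) ` B. linear_form l"
    using i by (auto simp: B_def)
  ultimately show ?thesis
    by (intro exI[of _ "(\<lambda>b. b i) ` B"]) simp
qed

end
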